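(* Let $G=(V,R,E)$ be a finite bipartite version–record graph, let $\mathbb{T}=(V,\mathbb{E})$ be a version tree on $V$ satisfying the standing assumptions below, and let $\delta>0$. Let $e^*=(v_i,v_j)\in\mathbb{E}$ be an edge with $w(v_i,v_j)\le\delta|R|$ (an edge that LyreSplit may split). Removing $e^*$ splits $\mathbb{T}$ into two subtrees with version sets $V_1,V_2$; let $R_1=\bigcup_{v\in V_1}R(v)$ and $R_2=\bigcup_{v\in V_2}R(v)$. Then the storage cost after splitting satisfies $\mathcal{S}=|R_1|+|R_2|\le(1+\delta)|R|$.
   Context: $(v,r)\in E$ means version $v$ contains record $r$; $R(v)=\{r:(v,r)\in E\}$ and $R=\bigcup_{v\in V}R(v)$. The version tree $\mathbb{T}$ is a rooted tree on $V$ whose edges go from parent to child version, with weight $w(v_i,v_j)=|R(v_i)\cap R(v_j)|$. Standing assumption (no cross-version diff rule): for every record $r$, the set of versions containing $r$ is a connected subtree of $\mathbb{T}$. The storage cost of a partitioning of $V$ into blocks is the sum over blocks of the number of distinct records contained in versions of that block. *)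

theory Defs
  imports Complex_Main
begin

definition recs :: "('v \<times> 'r) set \<Rightarrow> 'v \<Rightarrow> 'r set" where
  "recs E v = {r. (v, r) \<in> E}"

definition all_recs :: "'v set \<Rightarrow> ('v \<times> 'r) set \<Rightarrow> 'r set" where
  "all_recs V E = (\<Union>v\<in>V. recs E v)"

definition weight :: "('v \<times> 'r) set \<Rightarrow> 'v \<Rightarrow> 'v \<Rightarrow> nat" where
  "weight E vi vj = card (recs E vi \<inter> recs E vj)"

definition rooted_tree :: "'v set \<Rightarrow> ('v \<times> 'v) set \<Rightarrow> 'v \<Rightarrow> bool" where
  "rooted_tree V T rt \<longleftrightarrow>
     T \<subseteq> V \<times> V \<and> rt \<in> V \<and>
     (\<forall>u. (u, rt) \<notin> T) \<and>
     (\<forall>v\<in>V. v \<noteq> rt \<longrightarrow> (\<exists>!u. (u, v) \<in> T)) \<and>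
     (\<forall>v\<in>V. (rt, v) \<in> T\<^sup>*)"

definition undir_on :: "('v \<times> 'v) set \<Rightarrow> 'v set \<Rightarrow> ('v \<times> 'v) set" where
  "undir_on T S = {(x, y). x \<in> S \<and> y \<in> S \<and> ((x, y) \<in> T \<or> (y, x) \<in> T)}"

definition connected_in :: "('v \<times> 'v) set \<Rightarrow> 'v set \<Rightarrow> bool" where
  "connected_in T S \<longleftrightarrow> (\<forall>x\<in>S. \<forall>y\<in>S. (x, y) \<in> (undir_on T S)\<^sup>*)"

definition versions_of :: "'v set \<Rightarrow> ('v \<times> 'r) set \<Rightarrow> 'r \<Rightarrow> 'v set" where
  "versions_of V E r = {v\<in>V. (v, r) \<in> E}"

definition comp_after_removal :: "'v set \<Rightarrow> ('v \<times> 'v) set \<Rightarrow> ('v \<times> 'v) \<Rightarrow> 'v \<Rightarrow> 'v set" where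
  "comp_after_removal V T e x = {v\<in>V. (x, v) \<in> (undir_on (T - {e}) V)\<^sup>*}"

end

theory Submission
  imports Defs
begin

text \<open>Removing the edge \<open>(vi, vj)\<close> separates the descendants of \<open>vj\<close> from the rest of the
  tree, so the two components are \<open>vj\<close>'s subtree and its complement. A record stored on both
  sides has, by the standing assumption, a connected set of versions meeting both sides; a
  connected set can only cross between the sides along the removed edge, so the record lies in
  \<open>R(vi) \<inter> R(vj)\<close>. Hence \<open>|R\<^sub>1| + |R\<^sub>2| = |R\<^sub>1 \<union> R\<^sub>2| + |R\<^sub>1 \<inter> R\<^sub>2| \<le> |R| + w(vi, vj) \<le> (1 + \<delta>)|R|\<close>.\<close>

lemma rtrancl_crosses_into:
  assumes "(u, w) \<in> R\<^sup>*" "u \<notin> D" "w \<in> D"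
  obtains x y where "(x, y) \<in> R" "x \<notin> D" "y \<in> D"
  using assms by (induction rule: rtrancl_induct) auto

lemma rtrancl_preserves_closed:
  assumes "(u, w) \<in> R\<^sup>*" "\<And>x y. (x, y) \<in> R \<Longrightarrow> x \<in> D \<longleftrightarrow> y \<in> D"
  shows "u \<in> D \<longleftrightarrow> w \<in> D"
  using assms by (induction rule: rtrancl_induct) auto

lemma card_add_le_card_Int_bound:
  assumes "finite A" "finite W" "X \<subseteq> A" "Y \<subseteq> A" "X \<inter> Y \<subseteq> W"
  shows "card X + card Y \<le> card A + card W"
proof -
  have "finite X" "finite Y" using assms(1,3,4) by (auto intro: finite_subset)
  then have "card X + card Y = card (X \<union> Y) + card (X \<inter> Y)"
    by (rule card_Un_Int)
  also have "\<dots> \<le> card A + card W"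
    using assms by (intro add_mono card_mono) auto
  finally show ?thesis .
qed

lemma rooted_tree_parent_unique:
  assumes "rooted_tree V T rt" "(u, v) \<in> T" "(w, v) \<in> T"
  shows "u = w"
proof -
  have "v \<in> V" "v \<noteq> rt" using assms unfolding rooted_tree_def by auto
  then show ?thesis using assms unfolding rooted_tree_def by metis
qed

lemma rooted_tree_trancl_irrefl:
  assumes tree: "rooted_tree V T rt"
  shows "(v, v) \<notin> T\<^sup>+"
proof
  assume cyc: "(v, v) \<in> T\<^sup>+"
  have "T \<subseteq> V \<times> V" using tree unfolding rooted_tree_def by simp
  with cyc have "v \<in> V" using trancl_subset_Sigma by blast
  then have "(rt, v) \<in> T\<^sup>*" using tree unfolding rooted_tree_def by simp
  then show False using cyc
  proof (induction rule: rtrancl_induct)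
    case base
    then show ?case using tree unfolding rooted_tree_def by (metis tranclE)
  next
    case (step y z)
    from \<open>(z, z) \<in> T\<^sup>+\<close> obtain w where "(z, w) \<in> T\<^sup>*" "(w, z) \<in> T"
      by (meson tranclD2)
    moreover have "w = y"
      using rooted_tree_parent_unique[OF tree \<open>(w, z) \<in> T\<close> \<open>(y, z) \<in> T\<close>] .
    ultimately have "(y, y) \<in> T\<^sup>+" using \<open>(y, z) \<in> T\<close> by (meson rtrancl_into_trancl2)
    then show False by (rule step.IH)
  qed
qed

lemma rooted_tree_parent_not_descendant:
  assumes "rooted_tree V T rt" "(vi, vj) \<in> T"
  shows "vi \<notin> T\<^sup>* `` {vj}"
proof
  assume "vi \<in> T\<^sup>* `` {vj}"
  then have "(vi, vi) \<in> T\<^sup>+" using assms(2) by (simp add: rtrancl_into_trancl2)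
  then show False using rooted_tree_trancl_irrefl[OF assms(1)] by blast
qed

text \<open>Parents are unique, so the parent of a proper descendant of \<open>vj\<close> is again a descendant,
  and the parent of \<open>vj\<close> is \<open>vi\<close>.\<close>
lemma rooted_tree_descendants_closed:
  assumes tree: "rooted_tree V T rt" and edge: "(vi, vj) \<in> T"
    and ab: "(a, b) \<in> T" "(a, b) \<noteq> (vi, vj)"
  shows "a \<in> T\<^sup>* `` {vj} \<longleftrightarrow> b \<in> T\<^sup>* `` {vj}"
proof
  assume "a \<in> T\<^sup>* `` {vj}"
  with ab show "b \<in> T\<^sup>* `` {vj}" by (auto intro: rtrancl_into_rtrancl)
next
  assume b: "b \<in> T\<^sup>* `` {vj}"
  show "a \<in> T\<^sup>* `` {vj}"
  proof (cases "b = vj")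
    case True
    then show ?thesis using rooted_tree_parent_unique[OF tree ab(1)] edge ab(2) by auto
  next
    case False
    with b have "(vj, b) \<in> T\<^sup>+" by (simp add: rtrancl_eq_or_trancl)
    then obtain z where "(vj, z) \<in> T\<^sup>*" "(z, b) \<in> T" by (meson tranclD2)
    then show ?thesis using rooted_tree_parent_unique[OF tree ab(1)] by auto
  qed
qed

lemma undir_on_removal_descendants_closed:
  assumes "rooted_tree V T rt" "(vi, vj) \<in> T" "(x, y) \<in> undir_on (T - {(vi, vj)}) V"
  shows "x \<in> T\<^sup>* `` {vj} \<longleftrightarrow> y \<in> T\<^sup>* `` {vj}"
  using assms rooted_tree_descendants_closed[OF assms(1,2)] unfolding undir_on_def by auto

lemma comp_after_removal_parent_side:
  assumes "rooted_tree V T rt" "(vi, vj) \<in> T" "v \<in> comp_after_removal V T (vi, vj) vi"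
  shows "v \<notin> T\<^sup>* `` {vj}"
  using assms rooted_tree_parent_not_descendant[OF assms(1,2)]
    rtrancl_preserves_closed[OF _ undir_on_removal_descendants_closed[OF assms(1,2)]]
  unfolding comp_after_removal_def by blast

lemma comp_after_removal_child_side:
  assumes "rooted_tree V T rt" "(vi, vj) \<in> T" "v \<in> comp_after_removal V T (vi, vj) vj"
  shows "v \<in> T\<^sup>* `` {vj}"
  using assms rtrancl_preserves_closed[OF _ undir_on_removal_descendants_closed[OF assms(1,2)]]
  unfolding comp_after_removal_def by blast

lemma recs_shared_by_components:
  assumes tree: "rooted_tree V T rt" and edge: "(vi, vj) \<in> T"
    and subtree: "\<forall>r. connected_in T (versions_of V E r)"
  shows "(\<Union>v\<in>comp_after_removal V T (vi, vj) vi. recs E v)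
           \<inter> (\<Union>v\<in>comp_after_removal V T (vi, vj) vj. recs E v)
         \<subseteq> recs E vi \<inter> recs E vj"
proof
  fix r
  assume "r \<in> (\<Union>v\<in>comp_after_removal V T (vi, vj) vi. recs E v)
              \<inter> (\<Union>v\<in>comp_after_removal V T (vi, vj) vj. recs E v)"
  then obtain u w where u: "u \<in> comp_after_removal V T (vi, vj) vi" "r \<in> recs E u"
    and w: "w \<in> comp_after_removal V T (vi, vj) vj" "r \<in> recs E w"
    by auto
  define S where "S = versions_of V E r"
  have "u \<in> S" "w \<in> S"
    using u w unfolding S_def versions_of_def recs_def comp_after_removal_def by auto
  with subtree have "(u, w) \<in> (undir_on T S)\<^sup>*" unfolding S_def connected_in_def by blast
  then obtain x y where xy: "(x, y) \<in> undir_on T S" "x \<notin> T\<^sup>* `` {vj}" "y \<in> T\<^sup>* `` {vj}"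
    using rtrancl_crosses_into comp_after_removal_parent_side[OF tree edge u(1)]
      comp_after_removal_child_side[OF tree edge w(1)] by metis
  have "S \<subseteq> V" unfolding S_def versions_of_def by auto
  with xy undir_on_removal_descendants_closed[OF tree edge, of x y]
  have "{x, y} = {vi, vj}" "x \<in> S" "y \<in> S" unfolding undir_on_def by auto
  then have "vi \<in> S" "vj \<in> S" by (auto simp: doubleton_eq_iff)
  then show "r \<in> recs E vi \<inter> recs E vj" unfolding S_def versions_of_def recs_def by auto
qed

lemma finite_all_recs:
  assumes "finite E"
  shows "finite (all_recs V E)"
proof -
  have "all_recs V E \<subseteq> snd ` E" unfolding all_recs_def recs_def by force
  then show ?thesis using assms finite_subset by blast
qed

theorem lemma2:
  fixes V :: "'v set" and E :: "('v \<times> 'r) set" and T :: "('v \<times> 'v) set"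
    and rt :: 'v and \<delta> :: real and vi vj :: 'v
  assumes finV: "finite V" and finE: "finite E" and EV: "fst ` E \<subseteq> V"
    and tree: "rooted_tree V T rt"
    and subtree: "\<forall>r. connected_in T (versions_of V E r)"
    and delta: "\<delta> > 0"
    and edge: "(vi, vj) \<in> T"
    and wsmall: "real (weight E vi vj) \<le> \<delta> * real (card (all_recs V E))"
  shows "real (card (\<Union>v\<in>comp_after_removal V T (vi, vj) vi. recs E v)
              + card (\<Union>v\<in>comp_after_removal V T (vi, vj) vj. recs E v))
         \<le> (1 + \<delta>) * real (card (all_recs V E))"
proof -
  have "vi \<in> V" using edge tree unfolding rooted_tree_def by auto
  then have "recs E vi \<inter> recs E vj \<subseteq> all_recs V E" unfolding all_recs_def by auto
  then have fin_shared: "finite (recs E vi \<inter> recs E vj)"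
    using finite_all_recs[OF finE] finite_subset by blast
  have side: "(\<Union>v\<in>comp_after_removal V T (vi, vj) x. recs E v) \<subseteq> all_recs V E" for x
    unfolding all_recs_def comp_after_removal_def by auto
  have "card (\<Union>v\<in>comp_after_removal V T (vi, vj) vi. recs E v)
      + card (\<Union>v\<in>comp_after_removal V T (vi, vj) vj. recs E v)
      \<le> card (all_recs V E) + weight E vi vj"
    unfolding weight_def
    by (rule card_add_le_card_Int_bound[OF finite_all_recs[OF finE] fin_shared side side
          recs_shared_by_components[OF tree edge subtree]])
  then show ?thesis using wsmall by (simp add: algebra_simps)
qed

end
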